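(* Let $(X,\mathcal{A},\mu)$ be a probability space and $\theta$ a measure-preserving endomorphism. Let $\varphi,\psi:X\to\mathbb{R}$ be bounded ceiling functions and let $A\subset X$ be a hole for which the escape rates $\rho(A,\varphi)$ and $\rho(A,\psi)$ exist. Then: (1) If $\varphi\le\psi$, then $\rho(A,\varphi)\ge\rho(A,\psi)$. (2) For all $\lambda>0$, $\rho(A,\lambda\varphi)=\lambda^{-1}\rho(A,\varphi)$. (3) If there is a bounded measurable $\chi:X\to\mathbb{R}$ with $\psi=\varphi+\chi\circ\theta-\chi$, then $\rho(A,\psi)=\rho(A,\varphi)$.
   Context: A ceiling function is a measurable $\varphi:X\to\mathbb{R}$ with $\inf\varphi>0$. $S_n\varphi=\sum_{k=0}^{n-1}\varphi\circ\theta^k$, $N_t^\varphi(x)=\min\{n\in\mathbb{N}_0:S_n\varphi(x)>t\}$. The special flow over $\theta$ under $\varphi$: $\overline{X}_\varphi=\{(x,s):0\le s<\varphi(x)\}$ with $\overline{\mu}_\varphi$ the restriction of $\mu\otimes$Lebesgue, $\Phi^\varphi_t(x,s)=(x,s+t)$ if $t<\varphi(x)-s$ and $\Phi^\varphi_t(x,s)=(\theta^{N-1}x,s+t-S_{N-1}\varphi(x))$, $N=N^\varphi_{s+t}(x)$, otherwise. A hole $A\subset X$ is a measurable set with $\bigcup_{n\ge0}\theta^{-n}(A)=X$ a.e. The escape rate $\rho(A,\varphi)$ is $\lim_{t\to\infty}-\frac1t\log\overline{\mu}_\varphi(\{(x,s)\in\overline{X}_\varphi:\forall\tau\in[0,t]:\Phi^\varphi_\tau(x,s)\notin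 A\times\mathbb{R}\})$ when the limit exists. *)

theory Defs
  imports "HOL-Probability.Probability"
begin

definition measure_preserving_endo :: "'a measure \<Rightarrow> ('a \<Rightarrow> 'a) \<Rightarrow> bool" where
  "measure_preserving_endo M \<theta> \<longleftrightarrow> \<theta> \<in> M \<rightarrow>\<^sub>M M \<and>
     (\<forall>B\<in>sets M. emeasure M (\<theta> -` B \<inter> space M) = emeasure M B)"

definition birkhoff_sum :: "('a \<Rightarrow> 'a) \<Rightarrow> ('a \<Rightarrow> real) \<Rightarrow> nat \<Rightarrow> 'a \<Rightarrow> real" where
  "birkhoff_sum \<theta> \<phi> n x = (\<Sum>k<n. \<phi> ((\<theta> ^^ k) x))"

definition lap_number :: "('a \<Rightarrow> 'a) \<Rightarrow> ('a \<Rightarrow> real) \<Rightarrow> real \<Rightarrow> 'a \<Rightarrow> nat" where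
  "lap_number \<theta> \<phi> t x = (LEAST n. birkhoff_sum \<theta> \<phi> n x > t)"

definition ceiling_fun :: "'a measure \<Rightarrow> ('a \<Rightarrow> real) \<Rightarrow> bool" where
  "ceiling_fun M \<phi> \<longleftrightarrow> \<phi> \<in> borel_measurable M \<and> (\<exists>c>0. \<forall>x\<in>space M. c \<le> \<phi> x)"

definition bounded_fun :: "'a measure \<Rightarrow> ('a \<Rightarrow> real) \<Rightarrow> bool" where
  "bounded_fun M f \<longleftrightarrow> (\<exists>B. \<forall>x\<in>space M. \<bar>f x\<bar> \<le> B)"

definition special_flow_space :: "'a measure \<Rightarrow> ('a \<Rightarrow> real) \<Rightarrow> ('a \<times> real) set" where
  "special_flow_space M \<phi> = {(x, s). x \<in> space M \<and> 0 \<le> s \<and> s < \<phi> x}"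

definition special_flow :: "('a \<Rightarrow> 'a) \<Rightarrow> ('a \<Rightarrow> real) \<Rightarrow> real \<Rightarrow> 'a \<times> real \<Rightarrow> 'a \<times> real" where
  "special_flow \<theta> \<phi> t p = (case p of (x, s) \<Rightarrow>
     if t < \<phi> x - s then (x, s + t)
     else (let N = lap_number \<theta> \<phi> (s + t) x in
           ((\<theta> ^^ (N - 1)) x, s + t - birkhoff_sum \<theta> \<phi> (N - 1) x)))"

definition hole :: "'a measure \<Rightarrow> ('a \<Rightarrow> 'a) \<Rightarrow> 'a set \<Rightarrow> bool" where
  "hole M \<theta> A \<longleftrightarrow> A \<in> sets M \<and> (AE x in M. \<exists>n. (\<theta> ^^ n) x \<in> A)"

definition survivor_set :: "'a measure \<Rightarrow> ('a \<Rightarrow> 'a) \<Rightarrow> ('a \<Rightarrow> real) \<Rightarrow> 'a set \<Rightarrow> real \<Rightarrow> ('a \<times> real) set" where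
  "survivor_set M \<theta> \<phi> A t = {p \<in> special_flow_space M \<phi>. \<forall>\<tau>\<in>{0..t}. fst (special_flow \<theta> \<phi> \<tau> p) \<notin> A}"

definition survival :: "'a measure \<Rightarrow> ('a \<Rightarrow> 'a) \<Rightarrow> ('a \<Rightarrow> real) \<Rightarrow> 'a set \<Rightarrow> real \<Rightarrow> real" where
  "survival M \<theta> \<phi> A t = measure (M \<Otimes>\<^sub>M lborel) (survivor_set M \<theta> \<phi> A t)"

text \<open>-(1/t) log of the survival measure, in the extended reals (log 0 = -infinity).\<close>
definition escape_quot :: "'a measure \<Rightarrow> ('a \<Rightarrow> 'a) \<Rightarrow> ('a \<Rightarrow> real) \<Rightarrow> 'a set \<Rightarrow> real \<Rightarrow> ereal" where
  "escape_quot M \<theta> \<phi> A t =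
     (if survival M \<theta> \<phi> A t > 0 then ereal (- ln (survival M \<theta> \<phi> A t) / t) else \<infinity>)"

definition has_escape_rate :: "'a measure \<Rightarrow> ('a \<Rightarrow> 'a) \<Rightarrow> ('a \<Rightarrow> real) \<Rightarrow> 'a set \<Rightarrow> ereal \<Rightarrow> bool" where
  "has_escape_rate M \<theta> \<phi> A r \<longleftrightarrow> ((\<lambda>t. escape_quot M \<theta> \<phi> A t) \<longlongrightarrow> r) at_top"

end

theory Submission
  imports Defs "HOL-Real_Asymp.Real_Asymp"
begin

text \<open>
  A point \<open>(x, s)\<close> of the flow space survives up to time \<open>t\<close> iff the first \<open>N\<^sub>s\<^sub>+\<^sub>t(x)\<close>
  points of the \<open>\<theta>\<close>-orbit of \<open>x\<close> avoid \<open>A\<close>. Writing \<open>E\<^sub>t\<close> for the set of base points whose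
  first \<open>N\<^sub>t\<close> orbit points avoid \<open>A\<close>, a ceiling with \<open>c \<le> \<phi> \<le> K\<close> has survival measure between
  \<open>c \<mu>(E\<^sub>t\<^sub>+\<^sub>K)\<close> and \<open>K \<mu>(E\<^sub>t)\<close>. (1) A larger ceiling has fewer laps, hence larger survivor sets.
  (2) Multiplying the ceiling by \<open>\<lambda>\<close> rescales the fibre coordinate, so the survival measure at
  time \<open>t\<close> becomes \<open>\<lambda>\<close> times the old one at time \<open>t/\<lambda>\<close>. (3) Birkhoff sums of cohomologous
  ceilings differ by at most \<open>2 sup|\<chi>|\<close>, so \<open>E\<^sup>\<psi>\<^sub>t \<subseteq> E\<^sup>\<phi>\<^sub>t\<^sub>-\<^sub>2\<^sub>B\<close>, and each survival measure is
  bounded by a constant times the other one at a shifted time. The quotient \<open>-(1/t) log\<close>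
  ignores positive factors and bounded time shifts as \<open>t \<rightarrow> \<infinity>\<close>.
\<close>

section \<open>Exponential decay rates\<close>

definition log_decay_quot :: "(real \<Rightarrow> real) \<Rightarrow> real \<Rightarrow> ereal" where
  "log_decay_quot f t = (if f t > 0 then ereal (- ln (f t) / t) else \<infinity>)"

lemma escape_quot_eq_log_decay_quot:
  "escape_quot M \<theta> \<phi> A = log_decay_quot (survival M \<theta> \<phi> A)"
  by (auto simp: escape_quot_def log_decay_quot_def fun_eq_iff)

lemma log_decay_quot_limit_mono:
  fixes f g :: "real \<Rightarrow> real"
  assumes lim_f: "(log_decay_quot f \<longlongrightarrow> rf) at_top"
    and lim_g: "(log_decay_quot g \<longlongrightarrow> rg) at_top"
    and C: "C > 0" and D: "D \<ge> 0"
    and le: "eventually (\<lambda>t. f t \<le> C * g (t - D)) at_top"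
  shows "rg \<le> rf"
proof -
  define h where "h t = ereal (- ln C / t) + ereal ((t - D) / t) * log_decay_quot g (t - D)" for t
  have "((\<lambda>t. log_decay_quot g (t - D)) \<longlongrightarrow> rg) at_top"
    by (rule filterlim_compose[OF lim_g]) real_asymp
  moreover have "((\<lambda>t. ereal ((t - D) / t)) \<longlongrightarrow> ereal 1) at_top"
    by (intro tendsto_ereal) real_asymp
  moreover have "((\<lambda>t. ereal (- ln C / t)) \<longlongrightarrow> ereal 0) at_top"
    by (intro tendsto_ereal) real_asymp
  ultimately have "(h \<longlongrightarrow> ereal 0 + ereal 1 * rg) at_top"
    unfolding h_def by (intro tendsto_add_ereal_general tendsto_mult_ereal) auto
  then have lim_h: "(h \<longlongrightarrow> rg) at_top" by simp
  have "eventually (\<lambda>t. h t \<le> log_decay_quot f t) at_top"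
    using le eventually_gt_at_top[of "D + 1"]
  proof eventually_elim
    case (elim t)
    have t: "t > 0" "t - D > 0" using elim D by auto
    show ?case
    proof (cases "f t > 0")
      case True
      then have "C * g (t - D) > 0" using elim by linarith
      then have g_pos: "g (t - D) > 0" using C by (rule zero_less_mult_pos)
      have "ln (f t) \<le> ln (C * g (t - D))" using True elim by simp
      also have "\<dots> = ln C + ln (g (t - D))" using C g_pos by (simp add: ln_mult)
      finally have "(- ln C - ln (g (t - D))) / t \<le> - ln (f t) / t"
        using t by (intro divide_right_mono) auto
      moreover have "- ln C / t + (t - D) / t * (- ln (g (t - D)) / (t - D))
          = (- ln C - ln (g (t - D))) / t"
        using t by (simp add: field_simps)
      ultimately show ?thesis using True g_pos by (simp add: h_def log_decay_quot_def)
    qed (simp add: log_decay_quot_def)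
  qed
  then show ?thesis using tendsto_le[OF _ lim_f lim_h] by simp
qed

lemma log_decay_quot_limit_rescale:
  fixes f g :: "real \<Rightarrow> real"
  assumes lim_g: "(log_decay_quot g \<longlongrightarrow> r) at_top" and l: "l > 0"
    and f: "\<And>t. t > 0 \<Longrightarrow> f t = l * g (t / l)"
  shows "(log_decay_quot f \<longlongrightarrow> ereal (1 / l) * r) at_top"
proof -
  define h where "h t = ereal (- ln l / t) + ereal (1 / l) * log_decay_quot g (t / l)" for t
  have "((\<lambda>t. log_decay_quot g (t / l)) \<longlongrightarrow> r) at_top"
    by (rule filterlim_compose[OF lim_g]) (use l in real_asymp)
  moreover have "((\<lambda>t. ereal (- ln l / t)) \<longlongrightarrow> ereal 0) at_top"
    by (intro tendsto_ereal) real_asymp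
  ultimately have "(h \<longlongrightarrow> ereal 0 + ereal (1 / l) * r) at_top"
    unfolding h_def by (intro tendsto_add_ereal_general tendsto_cmult_ereal) auto
  then have lim_h: "(h \<longlongrightarrow> ereal (1 / l) * r) at_top" by simp
  have "eventually (\<lambda>t. h t = log_decay_quot f t) at_top"
    using eventually_gt_at_top[of 0]
  proof eventually_elim
    case (elim t)
    show ?case
    proof (cases "g (t / l) > 0")
      case True
      then have "f t > 0" using f[OF elim] l by simp
      moreover have "- ln l / t + 1 / l * (- ln (g (t / l)) / (t / l)) = - ln (f t) / t"
        using f[OF elim] l True elim by (simp add: field_simps ln_mult)
      ultimately show ?thesis using True by (simp add: h_def log_decay_quot_def)
    next
      case False
      then have "\<not> f t > 0" using f[OF elim] l by (simp add: mult_le_0_iff not_less)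
      then show ?thesis using False l by (simp add: h_def log_decay_quot_def)
    qed
  qed
  then show ?thesis using Lim_transform_eventually[OF lim_h] by blast
qed

lemma birkhoff_sum_0 [simp]: "birkhoff_sum \<theta> \<phi> 0 x = 0"
  by (simp add: birkhoff_sum_def)

lemma birkhoff_sum_Suc: "birkhoff_sum \<theta> \<phi> (Suc n) x = birkhoff_sum \<theta> \<phi> n x + \<phi> ((\<theta> ^^ n) x)"
  by (simp add: birkhoff_sum_def)

lemma birkhoff_sum_1 [simp]: "birkhoff_sum \<theta> \<phi> (Suc 0) x = \<phi> x"
  by (simp add: birkhoff_sum_def)

lemma birkhoff_sum_cmult: "birkhoff_sum \<theta> (\<lambda>x. l * \<phi> x) n x = l * birkhoff_sum \<theta> \<phi> n x"
  by (simp add: birkhoff_sum_def sum_distrib_left)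

lemma birkhoff_sum_mono_fun:
  assumes "\<And>k. \<phi> ((\<theta> ^^ k) x) \<le> \<psi> ((\<theta> ^^ k) x)"
  shows "birkhoff_sum \<theta> \<phi> n x \<le> birkhoff_sum \<theta> \<psi> n x"
  unfolding birkhoff_sum_def using assms by (intro sum_mono)

lemma birkhoff_sum_coboundary:
  assumes "\<And>k. \<psi> ((\<theta> ^^ k) x) = \<phi> ((\<theta> ^^ k) x) + g ((\<theta> ^^ Suc k) x) - g ((\<theta> ^^ k) x)"
  shows "birkhoff_sum \<theta> \<psi> n x = birkhoff_sum \<theta> \<phi> n x + g ((\<theta> ^^ n) x) - g x"
  by (induction n) (use assms in \<open>simp_all add: birkhoff_sum_Suc\<close>)

lemma lap_number_le: "birkhoff_sum \<theta> \<phi> n x > t \<Longrightarrow> lap_number \<theta> \<phi> t x \<le> n"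
  unfolding lap_number_def by (rule Least_le)

lemma birkhoff_sum_le_before_lap_number:
  "k < lap_number \<theta> \<phi> t x \<Longrightarrow> birkhoff_sum \<theta> \<phi> k x \<le> t"
  unfolding lap_number_def using not_less_Least by fastforce

section \<open>Survivor sets of a special flow\<close>

locale ceiling_system =
  fixes M :: "'a measure" and \<theta> :: "'a \<Rightarrow> 'a" and \<phi> :: "'a \<Rightarrow> real" and A :: "'a set"
    and c :: real
  assumes measurable_theta [measurable]: "\<theta> \<in> M \<rightarrow>\<^sub>M M"
    and borel_measurable_ceiling [measurable]: "\<phi> \<in> borel_measurable M"
    and sets_hole [measurable]: "A \<in> sets M"
    and ceiling_lower_pos: "c > 0"
    and ceiling_lower: "\<And>x. x \<in> space M \<Longrightarrow> c \<le> \<phi> x"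
begin

abbreviation S where "S \<equiv> birkhoff_sum \<theta> \<phi>"
abbreviation N where "N \<equiv> lap_number \<theta> \<phi>"

definition base_survivors :: "real \<Rightarrow> 'a set" where
  "base_survivors t = {x \<in> space M. \<forall>k < N t x. (\<theta> ^^ k) x \<notin> A}"

lemma measurable_funpow [measurable]: "\<theta> ^^ k \<in> M \<rightarrow>\<^sub>M M"
  by (rule measurable_compose_n[OF measurable_theta])

lemma funpow_in_space: "x \<in> space M \<Longrightarrow> (\<theta> ^^ k) x \<in> space M"
  by (rule measurable_space[OF measurable_funpow])

lemma borel_measurable_birkhoff_sum [measurable]: "S n \<in> borel_measurable M"
  unfolding birkhoff_sum_def by measurable

lemma birkhoff_sum_less_Suc: "x \<in> space M \<Longrightarrow> S k x < S (Suc k) x"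
  using ceiling_lower[OF funpow_in_space] ceiling_lower_pos
  by (simp add: birkhoff_sum_Suc add_pos_pos less_le_trans)

lemma birkhoff_sum_mono: "x \<in> space M \<Longrightarrow> j \<le> k \<Longrightarrow> S j x \<le> S k x"
  by (induction k) (auto simp: le_Suc_eq intro: order.trans less_imp_le birkhoff_sum_less_Suc)

lemma birkhoff_sum_lower: "x \<in> space M \<Longrightarrow> real n * c \<le> S n x"
proof (induction n)
  case (Suc n)
  then show ?case
    using ceiling_lower[OF funpow_in_space[OF Suc.prems, of n]] by (simp add: birkhoff_sum_Suc algebra_simps)
qed simp

lemma lap_number_exceeds:
  assumes x: "x \<in> space M"
  shows "t < S (N t x) x"
proof -
  obtain n :: nat where "t / c < real n" using reals_Archimedean2 by blast
  then have "t < real n * c" using ceiling_lower_pos by (simp add: field_simps)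
  then have "\<exists>n. t < S n x" using birkhoff_sum_lower[OF x, of n] by (meson less_le_trans)
  then show ?thesis unfolding lap_number_def by (rule LeastI_ex)
qed

lemma lap_number_mono: "x \<in> space M \<Longrightarrow> t \<le> u \<Longrightarrow> N t x \<le> N u x"
  using lap_number_exceeds[of x u] by (intro lap_number_le) auto

lemma lap_number_pos: "x \<in> space M \<Longrightarrow> 0 \<le> t \<Longrightarrow> 1 \<le> N t x"
  using lap_number_exceeds[of x t] by (cases "N t x") auto

lemma lap_number_eq_1: "x \<in> space M \<Longrightarrow> 0 \<le> t \<Longrightarrow> t < \<phi> x \<Longrightarrow> N t x = 1"
  using lap_number_pos[of x t] lap_number_le[of t \<theta> \<phi> 1 x] by auto

text \<open>At time \<open>max s (S\<^sub>k x)\<close> the flow started at \<open>(x, s)\<close> sits over \<open>\<theta>\<^sup>k x\<close>.\<close>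

lemma lap_number_max_birkhoff_sum:
  assumes x: "x \<in> space M" and s: "s < \<phi> x"
  shows "N (max s (S k x)) x = Suc k"
proof (rule antisym)
  have "S (Suc 0) x \<le> S (Suc k) x" by (rule birkhoff_sum_mono[OF x]) simp
  then show "N (max s (S k x)) x \<le> Suc k"
    using s birkhoff_sum_less_Suc[OF x, of k] by (intro lap_number_le) auto
  show "Suc k \<le> N (max s (S k x)) x"
  proof (rule ccontr)
    assume "\<not> Suc k \<le> N (max s (S k x)) x"
    then have "S (N (max s (S k x)) x) x \<le> S k x" by (intro birkhoff_sum_mono[OF x]) simp
    then show False using lap_number_exceeds[OF x, of "max s (S k x)"] by simp
  qed
qed

lemma base_survivors_antimono: "t \<le> u \<Longrightarrow> base_survivors u \<subseteq> base_survivors t"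
proof
  fix x assume "t \<le> u" and x: "x \<in> base_survivors u"
  then have "N t x \<le> N u x" by (intro lap_number_mono) (auto simp: base_survivors_def)
  then show "x \<in> base_survivors t" using x by (auto simp: base_survivors_def)
qed

lemma fst_special_flow:
  assumes x: "x \<in> space M" and s: "0 \<le> s" "s < \<phi> x" and \<tau>: "0 \<le> \<tau>"
  shows "fst (special_flow \<theta> \<phi> \<tau> (x, s)) = (\<theta> ^^ (N (s + \<tau>) x - 1)) x"
proof (cases "\<tau> < \<phi> x - s")
  case True
  then have "N (s + \<tau>) x = 1" using lap_number_eq_1[OF x, of "s + \<tau>"] s \<tau> by auto
  then show ?thesis using True by (simp add: special_flow_def)
qed (simp add: special_flow_def Let_def)

lemma survivor_set_eq:
  assumes t: "0 \<le> t"
  shows "survivor_set M \<theta> \<phi> A t =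
    {(x, s). x \<in> space M \<and> 0 \<le> s \<and> s < \<phi> x \<and> x \<in> base_survivors (s + t)}"
proof (intro set_eqI iffI; clarify)
  fix x s assume p: "(x, s) \<in> survivor_set M \<theta> \<phi> A t"
  then have x: "x \<in> space M" and s: "0 \<le> s" "s < \<phi> x"
    by (auto simp: survivor_set_def special_flow_space_def)
  have "(\<theta> ^^ k) x \<notin> A" if k: "k < N (s + t) x" for k
  proof -
    define \<tau> where "\<tau> = max s (S k x) - s"
    have "\<tau> \<in> {0..t}"
      using birkhoff_sum_le_before_lap_number[OF k] t by (auto simp: \<tau>_def)
    moreover have "N (s + \<tau>) x - 1 = k"
      using lap_number_max_birkhoff_sum[OF x s(2)] by (simp add: \<tau>_def)
    ultimately have "fst (special_flow \<theta> \<phi> \<tau> (x, s)) = (\<theta> ^^ k) x"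
      using fst_special_flow[OF x s] by simp
    moreover have "fst (special_flow \<theta> \<phi> \<tau> (x, s)) \<notin> A"
      using p \<open>\<tau> \<in> {0..t}\<close> unfolding survivor_set_def by blast
    ultimately show ?thesis by simp
  qed
  then show "x \<in> space M \<and> 0 \<le> s \<and> s < \<phi> x \<and> x \<in> base_survivors (s + t)"
    using x s by (auto simp: base_survivors_def)
next
  fix x s assume x: "x \<in> space M" and s: "0 \<le> s" "s < \<phi> x"
    and surv: "x \<in> base_survivors (s + t)"
  have "N (s + \<tau>) x - 1 < N (s + t) x" if "\<tau> \<in> {0..t}" for \<tau>
    using lap_number_mono[OF x, of "s + \<tau>" "s + t"] lap_number_pos[OF x, of "s + \<tau>"] s that
    by auto
  then show "(x, s) \<in> survivor_set M \<theta> \<phi> A t"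
    using x s surv fst_special_flow[OF x s]
    by (auto simp: survivor_set_def special_flow_space_def base_survivors_def)
qed

lemma sets_base_survivors [measurable]: "base_survivors t \<in> sets M"
proof -
  have "base_survivors t = {x \<in> space M. \<forall>k. k < N t x \<longrightarrow> (\<theta> ^^ k) x \<notin> A}"
    by (auto simp: base_survivors_def)
  also have "\<dots> \<in> sets M"
    unfolding lap_number_def by measurable
  finally show ?thesis .
qed

lemma sets_survivor_set:
  assumes "0 \<le> t"
  shows "survivor_set M \<theta> \<phi> A t \<in> sets (M \<Otimes>\<^sub>M lborel)"
proof -
  have "survivor_set M \<theta> \<phi> A t = {p \<in> space (M \<Otimes>\<^sub>M lborel). 0 \<le> snd p \<and> snd p < \<phi> (fst p) \<and>
      (\<forall>k. k < N (snd p + t) (fst p) \<longrightarrow> (\<theta> ^^ k) (fst p) \<notin> A)}"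
    unfolding survivor_set_eq[OF assms] by (auto simp: space_pair_measure base_survivors_def)
  also have "\<dots> \<in> sets (M \<Otimes>\<^sub>M lborel)"
    unfolding lap_number_def by measurable
  finally show ?thesis .
qed

end

lemma measure_pair_lborel_Times:
  assumes "B \<in> sets M" "emeasure M B < \<infinity>" "I \<in> sets borel" "emeasure lborel I < \<infinity>"
  shows "B \<times> I \<in> fmeasurable (M \<Otimes>\<^sub>M lborel)"
    and "measure (M \<Otimes>\<^sub>M lborel) (B \<times> I) = measure M B * measure lborel I"
  using assms
  by (auto simp: measure_def lborel.emeasure_pair_measure_Times enn2real_mult fmeasurable_def
      ennreal_mult_less_top)

locale bounded_ceiling_system = ceiling_system + finite_measure M +
  fixes K :: real
  assumes ceiling_upper: "\<And>x. x \<in> space M \<Longrightarrow> \<phi> x \<le> K"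
    and ceiling_lower_le_upper: "c \<le> K"
begin

lemma survivor_set_subset:
  assumes t: "0 \<le> t"
  shows "survivor_set M \<theta> \<phi> A t \<subseteq> base_survivors t \<times> {0..K}"
proof
  fix p assume "p \<in> survivor_set M \<theta> \<phi> A t"
  then obtain x s where "p = (x, s)" "x \<in> space M" "0 \<le> s" "s < \<phi> x" "x \<in> base_survivors (s + t)"
    unfolding survivor_set_eq[OF t] by auto
  then show "p \<in> base_survivors t \<times> {0..K}"
    using base_survivors_antimono[of t "s + t"] ceiling_upper[of x] by auto
qed

lemma base_survivors_Times_interval:
  "0 \<le> a \<Longrightarrow> base_survivors t \<times> {0..a} \<in> fmeasurable (M \<Otimes>\<^sub>M lborel)"
  "0 \<le> a \<Longrightarrow> measure (M \<Otimes>\<^sub>M lborel) (base_survivors t \<times> {0..a}) = measure M (base_survivors t) * a"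
  "0 \<le> a \<Longrightarrow> measure (M \<Otimes>\<^sub>M lborel) (base_survivors t \<times> {0..<a}) = measure M (base_survivors t) * a"
  using measure_pair_lborel_Times[of "base_survivors t" M "{0..a}"]
    measure_pair_lborel_Times[of "base_survivors t" M "{0..<a}"]
  by (auto simp: less_top[symmetric])

lemma ceiling_upper_nonneg: "0 \<le> K"
  using ceiling_lower_pos ceiling_lower_le_upper by simp

lemma fmeasurable_survivor_set:
  assumes t: "0 \<le> t"
  shows "survivor_set M \<theta> \<phi> A t \<in> fmeasurable (M \<Otimes>\<^sub>M lborel)"
  by (rule fmeasurableI2[OF base_survivors_Times_interval(1)[OF ceiling_upper_nonneg]
        survivor_set_subset[OF t] sets_survivor_set[OF t]])

lemma survival_le:
  assumes t: "0 \<le> t"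
  shows "survival M \<theta> \<phi> A t \<le> K * measure M (base_survivors t)"
proof -
  have "survival M \<theta> \<phi> A t \<le> measure (M \<Otimes>\<^sub>M lborel) (base_survivors t \<times> {0..K})"
    unfolding survival_def
    by (rule measure_mono_fmeasurable[OF survivor_set_subset[OF t] sets_survivor_set[OF t]
          base_survivors_Times_interval(1)[OF ceiling_upper_nonneg]])
  then show ?thesis
    by (simp add: base_survivors_Times_interval(2)[OF ceiling_upper_nonneg] mult.commute)
qed

lemma survival_ge:
  assumes t: "0 \<le> t"
  shows "c * measure M (base_survivors (t + K)) \<le> survival M \<theta> \<phi> A t"
proof -
  have "base_survivors (t + K) \<times> {0..<c} \<subseteq> survivor_set M \<theta> \<phi> A t"
  proof
    fix p assume "p \<in> base_survivors (t + K) \<times> {0..<c}"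
    then obtain x s where p: "p = (x, s)" and x: "x \<in> base_survivors (t + K)" and s: "0 \<le> s" "s < c"
      by auto
    have "x \<in> space M" using x by (auto simp: base_survivors_def)
    moreover have "s + t \<le> t + K"
      using s ceiling_lower_le_upper by simp
    then have "x \<in> base_survivors (s + t)"
      using base_survivors_antimono x by blast
    ultimately show "p \<in> survivor_set M \<theta> \<phi> A t"
      using p s ceiling_lower[of x] by (auto simp: survivor_set_eq[OF t])
  qed
  from measure_mono_fmeasurable[OF this _ fmeasurable_survivor_set[OF t]]
  show ?thesis
    using base_survivors_Times_interval(3)[of c "t + K"] ceiling_lower_pos
    by (simp add: survival_def mult.commute)
qed

end

section \<open>Comparing survival measures\<close>

lemma survival_mono_ceiling:
  assumes "ceiling_system M \<theta> \<phi> A c" "bounded_ceiling_system M \<theta> \<psi> A d K"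
    and le: "\<And>x. x \<in> space M \<Longrightarrow> \<phi> x \<le> \<psi> x" and t: "0 \<le> t"
  shows "survival M \<theta> \<phi> A t \<le> survival M \<theta> \<psi> A t"
proof -
  interpret P: ceiling_system M \<theta> \<phi> A c by fact
  interpret Q: bounded_ceiling_system M \<theta> \<psi> A d K by fact
  have "Q.N u x \<le> P.N u x" if x: "x \<in> space M" for u x
    using P.lap_number_exceeds[OF x, of u] le[OF P.funpow_in_space[OF x]]
    by (intro lap_number_le) (meson birkhoff_sum_mono_fun less_le_trans)
  then have base_sub: "P.base_survivors u \<subseteq> Q.base_survivors u" for u
    unfolding P.base_survivors_def Q.base_survivors_def using order_less_le_trans by blast
  have "survivor_set M \<theta> \<phi> A t \<subseteq> survivor_set M \<theta> \<psi> A t"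
  proof
    fix p assume "p \<in> survivor_set M \<theta> \<phi> A t"
    then obtain x s where "p = (x, s)" "x \<in> space M" "0 \<le> s" "s < \<phi> x" "x \<in> P.base_survivors (s + t)"
      unfolding P.survivor_set_eq[OF t] by auto
    then show "p \<in> survivor_set M \<theta> \<psi> A t"
      unfolding Q.survivor_set_eq[OF t] using le[of x] base_sub by auto
  qed
  then show ?thesis
    unfolding survival_def
    by (rule measure_mono_fmeasurable[OF _ P.sets_survivor_set[OF t] Q.fmeasurable_survivor_set[OF t]])
qed

lemma emeasure_lborel_vimage_mult:
  assumes B: "B \<in> sets borel" and l: "l > 0"
  shows "emeasure lborel ((\<lambda>s. (1 / l) * s) -` B) = ennreal l * emeasure lborel B"
proof -
  have "emeasure lborel ((\<lambda>s. (1 / l) * s) -` B) = emeasure (distr lborel borel ((*) (1 / l))) B"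
    using B by (subst emeasure_distr) auto
  also have "\<dots> = emeasure (density lborel (\<lambda>_. ennreal l)) B"
    using l by (subst lborel_distr_mult) auto
  also have "\<dots> = ennreal l * emeasure lborel B"
    using B by (simp add: emeasure_density nn_integral_cmult_indicator)
  finally show ?thesis .
qed

lemma survival_cmult_ceiling:
  assumes "ceiling_system M \<theta> \<phi> A c" and l: "l > 0" and t: "0 \<le> t"
  shows "survival M \<theta> (\<lambda>x. l * \<phi> x) A t = l * survival M \<theta> \<phi> A (t / l)"
proof -
  interpret P: ceiling_system M \<theta> \<phi> A c by fact
  interpret L: ceiling_system M \<theta> "\<lambda>x. l * \<phi> x" A "l * c"
    using P.ceiling_lower l P.ceiling_lower_pos by unfold_locales auto
  have "L.N u x = P.N (u / l) x" for u x
    unfolding lap_number_def birkhoff_sum_cmult using l by (simp add: pos_divide_less_eq mult.commute)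
  then have base_eq: "L.base_survivors u = P.base_survivors (u / l)" for u
    by (simp add: L.base_survivors_def P.base_survivors_def)
  have tl: "0 \<le> t / l" using t l by simp
  define X where "X = survivor_set M \<theta> \<phi> A (t / l)"
  define Y where "Y = survivor_set M \<theta> (\<lambda>x. l * \<phi> x) A t"
  have X [measurable]: "X \<in> sets (M \<Otimes>\<^sub>M lborel)" unfolding X_def by (rule P.sets_survivor_set[OF tl])
  have Y: "Y \<in> sets (M \<Otimes>\<^sub>M lborel)" unfolding Y_def by (rule L.sets_survivor_set[OF t])
  have slice: "Pair x -` Y = (\<lambda>s. (1 / l) * s) -` (Pair x -` X)" for x
  proof -
    have "s / l + t / l = (s + t) / l" "(0 \<le> s / l) = (0 \<le> s)" "(s / l < \<phi> x) = (s < l * \<phi> x)"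
      for s using l by (auto simp: add_divide_distrib zero_le_divide_iff pos_divide_less_eq mult.commute)
    then show ?thesis
      unfolding X_def Y_def L.survivor_set_eq[OF t] P.survivor_set_eq[OF tl] base_eq
      by (simp add: vimage_def)
  qed
  have "emeasure (M \<Otimes>\<^sub>M lborel) Y = (\<integral>\<^sup>+x. emeasure lborel (Pair x -` Y) \<partial>M)"
    by (rule lborel.emeasure_pair_measure_alt[OF Y])
  also have "\<dots> = (\<integral>\<^sup>+x. ennreal l * emeasure lborel (Pair x -` X) \<partial>M)"
    unfolding slice using sets_Pair1[OF X] l by (intro nn_integral_cong emeasure_lborel_vimage_mult) auto
  also have "\<dots> = ennreal l * emeasure (M \<Otimes>\<^sub>M lborel) X"
    by (simp add: nn_integral_cmult lborel.emeasure_pair_measure_alt[OF X])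
  finally show ?thesis
    unfolding survival_def measure_def X_def Y_def using l by (simp add: enn2real_mult)
qed

text \<open>The time shift \<open>2B + K\<^sub>\<phi>\<close> absorbs the Birkhoff-sum defect \<open>2B\<close> and the passage from
  \<open>E\<^sub>t\<close> to \<open>E\<^sub>t\<^sub>+\<^sub>K\<close> in the lower bound for the \<open>\<phi>\<close>-survival.\<close>

lemma survival_coboundary_le:
  assumes "bounded_ceiling_system M \<theta> \<phi> A c K\<phi>" "bounded_ceiling_system M \<theta> \<psi> A d K\<psi>"
    and g: "\<And>x. x \<in> space M \<Longrightarrow> \<bar>g x\<bar> \<le> B"
    and coh: "\<And>x. x \<in> space M \<Longrightarrow> \<psi> x = \<phi> x + g (\<theta> x) - g x"
    and B: "0 \<le> B" and t: "2 * B + K\<phi> \<le> t"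
  shows "survival M \<theta> \<psi> A t \<le> (K\<psi> / c) * survival M \<theta> \<phi> A (t - (2 * B + K\<phi>))"
proof -
  interpret P: bounded_ceiling_system M \<theta> \<phi> A c K\<phi> by fact
  interpret Q: bounded_ceiling_system M \<theta> \<psi> A d K\<psi> by fact
  have "P.N (u - 2 * B) x \<le> Q.N u x" if x: "x \<in> space M" for u x
  proof (rule lap_number_le)
    have "Q.S n x = P.S n x + g ((\<theta> ^^ n) x) - g x" for n
      using coh[OF P.funpow_in_space[OF x]] by (intro birkhoff_sum_coboundary) simp
    then show "u - 2 * B < P.S (Q.N u x) x"
      using Q.lap_number_exceeds[OF x, of u] g[OF P.funpow_in_space[OF x]] g[OF x]
      by (smt (verit))
  qed
  then have base_sub: "Q.base_survivors t \<subseteq> P.base_survivors (t - 2 * B)"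
    unfolding Q.base_survivors_def P.base_survivors_def using order_less_le_trans by blast
  have t0: "0 \<le> t" "0 \<le> t - (2 * B + K\<phi>)"
    using t B P.ceiling_upper_nonneg by auto
  have "survival M \<theta> \<psi> A t \<le> K\<psi> * measure M (Q.base_survivors t)"
    by (rule Q.survival_le[OF t0(1)])
  also have "\<dots> \<le> K\<psi> * measure M (P.base_survivors (t - 2 * B))"
    using Q.ceiling_upper_nonneg base_sub
    by (intro mult_left_mono P.finite_measure_mono) auto
  also have "\<dots> = (K\<psi> / c) * (c * measure M (P.base_survivors (t - (2 * B + K\<phi>) + K\<phi>)))"
    using P.ceiling_lower_pos by (simp add: algebra_simps)
  also have "\<dots> \<le> (K\<psi> / c) * survival M \<theta> \<phi> A (t - (2 * B + K\<phi>))"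
    using Q.ceiling_upper_nonneg P.ceiling_lower_pos
    by (intro mult_left_mono P.survival_ge[OF t0(2)]) auto
  finally show ?thesis .
qed

lemma bounded_ceiling_systemI:
  assumes "prob_space M" "measure_preserving_endo M \<theta>" "hole M \<theta> A"
    and "ceiling_fun M \<phi>" "bounded_fun M \<phi>"
  obtains c K where "bounded_ceiling_system M \<theta> \<phi> A c K"
proof -
  obtain c B where c: "c > 0" "\<And>x. x \<in> space M \<Longrightarrow> c \<le> \<phi> x"
    and B: "\<And>x. x \<in> space M \<Longrightarrow> \<bar>\<phi> x\<bar> \<le> B"
    using assms(4,5) by (auto simp: ceiling_fun_def bounded_fun_def)
  have "ceiling_system M \<theta> \<phi> A c"
    using assms(2-4) c by unfold_locales (auto simp: measure_preserving_endo_def hole_def ceiling_fun_def)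
  moreover have "finite_measure M"
    using assms(1) by (simp add: prob_space_def)
  moreover have "bounded_ceiling_system_axioms M \<phi> c (max B c)"
    using B by unfold_locales (auto simp: abs_le_iff le_max_iff_disj)
  ultimately show ?thesis
    by (intro that bounded_ceiling_system.intro)
qed

lemma escape_rate_antimono_ceiling:
  assumes "ceiling_system M \<theta> \<phi> A c" "bounded_ceiling_system M \<theta> \<psi> A d K"
    and le: "\<And>x. x \<in> space M \<Longrightarrow> \<phi> x \<le> \<psi> x"
    and "has_escape_rate M \<theta> \<phi> A \<rho>\<phi>" "has_escape_rate M \<theta> \<psi> A \<rho>\<psi>"
  shows "\<rho>\<psi> \<le> \<rho>\<phi>"
proof (rule log_decay_quot_limit_mono[where C = 1 and D = 0])
  show "eventually (\<lambda>t. survival M \<theta> \<phi> A t \<le> 1 * survival M \<theta> \<psi> A (t - 0)) at_top"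
    using eventually_ge_at_top[of 0] by eventually_elim (simp add: survival_mono_ceiling[OF assms(1-3)])
qed (use assms(4,5) in \<open>auto simp: has_escape_rate_def escape_quot_eq_log_decay_quot\<close>)

lemma has_escape_rate_cmult_ceiling:
  assumes "ceiling_system M \<theta> \<phi> A c" "has_escape_rate M \<theta> \<phi> A \<rho>" and "l > 0"
  shows "has_escape_rate M \<theta> (\<lambda>x. l * \<phi> x) A (ereal (1 / l) * \<rho>)"
  using assms survival_cmult_ceiling[OF assms(1,3)]
  unfolding has_escape_rate_def escape_quot_eq_log_decay_quot
  by (intro log_decay_quot_limit_rescale) auto

lemma escape_rate_coboundary_le:
  assumes "bounded_ceiling_system M \<theta> \<phi> A c K\<phi>" "bounded_ceiling_system M \<theta> \<psi> A d K\<psi>"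
    and g: "\<And>x. x \<in> space M \<Longrightarrow> \<bar>g x\<bar> \<le> B"
    and coh: "\<And>x. x \<in> space M \<Longrightarrow> \<psi> x = \<phi> x + g (\<theta> x) - g x"
    and B: "0 \<le> B"
    and "has_escape_rate M \<theta> \<phi> A \<rho>\<phi>" "has_escape_rate M \<theta> \<psi> A \<rho>\<psi>"
  shows "\<rho>\<phi> \<le> \<rho>\<psi>"
proof -
  interpret P: bounded_ceiling_system M \<theta> \<phi> A c K\<phi> by fact
  interpret Q: bounded_ceiling_system M \<theta> \<psi> A d K\<psi> by fact
  show ?thesis
  proof (rule log_decay_quot_limit_mono)
    show "eventually (\<lambda>t. survival M \<theta> \<psi> A t
        \<le> (K\<psi> / c) * survival M \<theta> \<phi> A (t - (2 * B + K\<phi>))) at_top"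
      using eventually_ge_at_top[of "2 * B + K\<phi>"]
      by eventually_elim (rule survival_coboundary_le[OF assms(1-5)])
  qed (use assms(6,7) B P.ceiling_lower_pos P.ceiling_upper_nonneg Q.ceiling_lower_pos
      Q.ceiling_lower_le_upper in \<open>auto simp: has_escape_rate_def escape_quot_eq_log_decay_quot\<close>)
qed

theorem proposition3p11:
  fixes M :: "'a measure" and \<theta> :: "'a \<Rightarrow> 'a" and \<phi> \<psi> :: "'a \<Rightarrow> real"
    and A :: "'a set" and \<rho>\<phi> \<rho>\<psi> :: ereal
  assumes "prob_space M"
    and "measure_preserving_endo M \<theta>"
    and "ceiling_fun M \<phi>" and "bounded_fun M \<phi>"
    and "ceiling_fun M \<psi>" and "bounded_fun M \<psi>"
    and "hole M \<theta> A"
    and "has_escape_rate M \<theta> \<phi> A \<rho>\<phi>"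
    and "has_escape_rate M \<theta> \<psi> A \<rho>\<psi>"
  shows "((\<forall>x\<in>space M. \<phi> x \<le> \<psi> x) \<longrightarrow> \<rho>\<phi> \<ge> \<rho>\<psi>)
    \<and> (\<forall>l>0. has_escape_rate M \<theta> (\<lambda>x. l * \<phi> x) A (ereal (1 / l) * \<rho>\<phi>))
    \<and> ((\<exists>g. g \<in> borel_measurable M \<and> bounded_fun M g \<and>
          (\<forall>x\<in>space M. \<psi> x = \<phi> x + g (\<theta> x) - g x)) \<longrightarrow> \<rho>\<psi> = \<rho>\<phi>)"
proof (intro conjI impI allI)
  obtain c K\<phi> where P: "bounded_ceiling_system M \<theta> \<phi> A c K\<phi>"
    using bounded_ceiling_systemI[OF assms(1,2,7,3,4)] .
  obtain d K\<psi> where Q: "bounded_ceiling_system M \<theta> \<psi> A d K\<psi>"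
    using bounded_ceiling_systemI[OF assms(1,2,7,5,6)] .
  have P': "ceiling_system M \<theta> \<phi> A c"
    using P by (rule bounded_ceiling_system.axioms(1))
  show "\<rho>\<psi> \<le> \<rho>\<phi>" if "\<forall>x\<in>space M. \<phi> x \<le> \<psi> x"
    using escape_rate_antimono_ceiling[OF P' Q _ assms(8,9)] that by blast
  show "has_escape_rate M \<theta> (\<lambda>x. l * \<phi> x) A (ereal (1 / l) * \<rho>\<phi>)" if "l > 0" for l
    by (rule has_escape_rate_cmult_ceiling[OF P' assms(8) that])
  assume "\<exists>g. g \<in> borel_measurable M \<and> bounded_fun M g \<and> (\<forall>x\<in>space M. \<psi> x = \<phi> x + g (\<theta> x) - g x)"
  then obtain g B where "\<And>x. x \<in> space M \<Longrightarrow> \<bar>g x\<bar> \<le> B"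
    and coh: "\<And>x. x \<in> space M \<Longrightarrow> \<psi> x = \<phi> x + g (\<theta> x) - g x"
    unfolding bounded_fun_def by blast
  then have g: "\<And>x. x \<in> space M \<Longrightarrow> \<bar>g x\<bar> \<le> max B 0"
    by (meson max.coboundedI1)
  have "\<rho>\<phi> \<le> \<rho>\<psi>"
    by (rule escape_rate_coboundary_le[OF P Q g coh max.cobounded2 assms(8,9)])
  moreover have "\<rho>\<psi> \<le> \<rho>\<phi>"
    by (rule escape_rate_coboundary_le[where g = "\<lambda>x. - g x", OF Q P _ _ _ assms(9,8)])
      (use g coh in auto)
  ultimately show "\<rho>\<psi> = \<rho>\<phi>" by simp
qed

end
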